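(* Let $\nu\in\mathbb{N}$, let $(X,d)$ be a $\nu$-generalized metric space, and let $\{x_n\}_{n\in\mathbb{N}}$ be a sequence in $X$ whose terms are pairwise distinct. Suppose that for every $\epsilon>0$ and for any two subsequences $\{x_{p_i}\}$ and $\{x_{q_i}\}$ of $\{x_n\}$, if $\limsup_{i\to\infty} d(x_{p_i},x_{q_i})\le\epsilon$, then there is $N$ such that $d(x_{p_i+1},x_{q_i+1})\le\epsilon$ for all $i\ge N$. If $d(x_n,x_{n+1})\to0$ and $d(x_n,x_{n+2})\to0$ as $n\to\infty$, then $\{x_n\}$ is Cauchy.
   Context: Let $X$ be a nonempty set, $d:X\times X\to[0,\infty)$, and $\nu\in\mathbb{N}$. $(X,d)$ is a $\nu$-generalized metric space if: (1) $d(x,y)=0$ iff $x=y$; (2) $d(x,y)=d(y,x)$ for all $x,y$; (3) $d(x,y)\le d(x,u_1)+d(u_1,u_2)+\dots+d(u_\nu,y)$ for every set $\{x,u_1,\dots,u_\nu,y\}$ of $\nu+2$ pairwise distinct elements of $X$. For $k\in\mathbb{N}$, a sequence $\{x_n\}$ in $X$ is $k$-Cauchy if $\lim_{n\to\infty}\sup\{d(x_n,x_{n+1+mk}): m\in\mathbb{Z}^+\}=0$, where $\mathbb{Z}^+$ denotes the nonnegative integers; it is Cauchy if it is $1$-Cauchy. A subsequence $\{x_{p_i}\}$ means $p_1<p_2<\cdots$ in $\mathbb{N}$. *)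

theory Defs
  imports "HOL-Analysis.Analysis"
begin

definition path_len :: "('a \<Rightarrow> 'a \<Rightarrow> real) \<Rightarrow> 'a \<Rightarrow> 'a list \<Rightarrow> 'a \<Rightarrow> real" where
  "path_len d x us y = sum_list (map2 d (x # us) (us @ [y]))"

definition gen_metric :: "nat \<Rightarrow> 'a set \<Rightarrow> ('a \<Rightarrow> 'a \<Rightarrow> real) \<Rightarrow> bool" where
  "gen_metric \<nu> X d \<longleftrightarrow> \<nu> \<ge> 1 \<and> X \<noteq> {} \<and>
     (\<forall>x\<in>X. \<forall>y\<in>X. d x y \<ge> 0) \<and>
     (\<forall>x\<in>X. \<forall>y\<in>X. d x y = 0 \<longleftrightarrow> x = y) \<and>
     (\<forall>x\<in>X. \<forall>y\<in>X. d x y = d y x) \<and>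
     (\<forall>x\<in>X. \<forall>y\<in>X. \<forall>us. set us \<subseteq> X \<and> length us = \<nu> \<and> distinct (x # us @ [y])
        \<longrightarrow> d x y \<le> path_len d x us y)"

definition k_cauchy :: "('a \<Rightarrow> 'a \<Rightarrow> real) \<Rightarrow> nat \<Rightarrow> (nat \<Rightarrow> 'a) \<Rightarrow> bool" where
  "k_cauchy d k x \<longleftrightarrow>
     ((\<lambda>n. SUP m. ereal (d (x n) (x (n + 1 + m * k)))) \<longlongrightarrow> 0) sequentially"

definition gm_cauchy :: "('a \<Rightarrow> 'a \<Rightarrow> real) \<Rightarrow> (nat \<Rightarrow> 'a) \<Rightarrow> bool" where
  "gm_cauchy d x \<longleftrightarrow> k_cauchy d 1 x"

end

theory Submission imports Defs begin

text \<open>If d(x n, x (n + h)) \<rightarrow> 0 for all gaps h < k, then x n and x (n + k) are joined by a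
  walk through \<nu> further distinct terms of the sequence whose consecutive index gaps are all
  smaller than k, so the \<nu>-generalized triangle inequality gives d(x n, x (n + k)) \<rightarrow> 0; by
  induction from k = 1, 2 this holds for every fixed gap.

  If the sequence were not Cauchy, some \<epsilon> > 0 would admit arbitrarily late n with a first
  index m > n at which d(x n, x m) > \<epsilon>. As d is uniformly small on the window n - 1, \<dots>, n + \<nu>,
  the walk n - 1, n + 1, \<dots>, n + \<nu> - 1, n, m - 1 shows d(x (n - 1), x (m - 1)) \<le> \<epsilon> + o(1).
  This produces subsequences p, q with limsup d(x p, x q) \<le> \<epsilon> but d(x (p + 1), x (q + 1)) > \<epsilon>,
  contradicting the hypothesis on subsequences.\<close>

lemma path_len_Nil: "path_len d a [] b = d a b"
  by (simp add: path_len_def)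

lemma path_len_Cons: "path_len d a (u # us) b = d a u + path_len d u us b"
  by (simp add: path_len_def)

lemma path_len_snoc: "path_len d a (us @ [u]) b = path_len d a us u + d u b"
  by (induction us arbitrary: a) (simp_all add: path_len_Cons path_len_Nil)

lemma path_len_le:
  assumes "successively (\<lambda>u v. d u v \<le> (\<eta>::real)) (a # us @ [b])"
  shows "path_len d a us b \<le> (real (length us) + 1) * \<eta>"
  using assms
proof (induction us arbitrary: a)
  case Nil
  then show ?case by (simp add: path_len_Nil)
next
  case (Cons u us)
  then have "d a u \<le> \<eta>" and "path_len d u us b \<le> (real (length us) + 1) * \<eta>"
    by auto
  then show ?case by (simp add: path_len_Cons algebra_simps)
qed

lemma successively_if_all: "(\<forall>u\<in>set xs. \<forall>v\<in>set xs. P u v) \<Longrightarrow> successively P xs"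
  by (induction xs rule: induct_list012) auto

lemma successively_upt_Suc: "successively (\<lambda>i j. j = Suc i) [a..<b]"
proof (induction b)
  case (Suc b)
  then show ?case by (cases "a < b"; cases "a = b") (auto simp: successively_append_iff)
qed simp

lemma tendsto_zero_if_eventually_le:
  fixes f :: "'b \<Rightarrow> real"
  assumes "\<And>n. 0 \<le> f n" and "\<And>r. r > 0 \<Longrightarrow> eventually (\<lambda>n. f n \<le> r) F"
  shows "(f \<longlongrightarrow> 0) F"
proof (rule order_tendstoI)
  fix r :: real assume "0 < r"
  then have "eventually (\<lambda>n. f n \<le> r / 2) F" by (intro assms(2)) simp
  then show "eventually (\<lambda>n. f n < r) F"
    by (rule eventually_mono) (use \<open>0 < r\<close> in simp)
next
  fix r :: real assume "r < 0"
  then show "eventually (\<lambda>n. r < f n) F"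
    using assms(1) by (simp add: less_le_trans)
qed

lemma strict_mono_pairs_exist:
  assumes "\<And>i N. \<exists>a b. N \<le> a \<and> a < b \<and> P i a b"
  obtains p q :: "nat \<Rightarrow> nat" where "strict_mono p" "strict_mono q" "\<And>i. P i (p i) (q i)"
proof -
  have "\<forall>i N. \<exists>r. N \<le> fst r \<and> fst r < snd r \<and> P i (fst r) (snd r)"
    using assms by (metis fst_conv snd_conv)
  then obtain f where f: "\<And>i N. N \<le> fst (f i N) \<and> fst (f i N) < snd (f i N) \<and> P i (fst (f i N)) (snd (f i N))"
    by metis
  define pq where "pq = rec_nat (f 0 0) (\<lambda>i r. f (Suc i) (snd r + 1))"
  have pq_Suc: "pq (Suc i) = f (Suc i) (snd (pq i) + 1)" for i
    by (simp add: pq_def)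
  have P: "P i (fst (pq i)) (snd (pq i))" for i
    using f by (cases i) (simp_all add: pq_def)
  have lt: "fst (pq i) < snd (pq i)" for i
    using f by (cases i) (simp_all add: pq_def)
  have "snd (pq i) < fst (pq (Suc i))" for i
    using f[where i = "Suc i" and N = "snd (pq i) + 1"] by (simp add: pq_Suc)
  with lt have "strict_mono (fst \<circ> pq)" "strict_mono (snd \<circ> pq)"
    by (auto simp: strict_mono_Suc_iff intro: less_trans)
  with P show ?thesis by (intro that[of "fst \<circ> pq" "snd \<circ> pq"]) auto
qed

lemma limsup_le_if_le_plus_inverse:
  assumes "\<And>i. a i \<le> \<epsilon> + 1 / (real i + 1)"
  shows "limsup (\<lambda>i. ereal (a i)) \<le> ereal \<epsilon>"
proof -
  have "limsup (\<lambda>i. ereal (a i)) \<le> limsup (\<lambda>i. ereal (\<epsilon> + inverse (real (Suc i))))"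
    by (rule Limsup_mono) (use assms in \<open>simp add: divide_inverse add.commute\<close>)
  also have "\<dots> = ereal \<epsilon>"
  proof (rule lim_imp_Limsup)
    show "(\<lambda>i. ereal (\<epsilon> + inverse (real (Suc i)))) \<longlonglongrightarrow> ereal \<epsilon>"
      using tendsto_add[OF tendsto_const LIMSEQ_inverse_real_of_nat, of \<epsilon>] by (simp add: tendsto_ereal)
  qed simp
  finally show ?thesis .
qed

lemma gm_cauchyI:
  assumes "\<And>n m. 0 \<le> d (x n) (x m)"
    and "\<And>\<epsilon>. \<epsilon> > 0 \<Longrightarrow> eventually (\<lambda>n. \<forall>m>n. d (x n) (x m) \<le> \<epsilon>) sequentially"
  shows "gm_cauchy d x"
  unfolding gm_cauchy_def k_cauchy_def
proof (rule order_tendstoI)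
  fix a :: ereal assume "a < 0"
  have "a < (SUP m. ereal (d (x n) (x (n + 1 + m * 1))))" for n
  proof -
    have "a < ereal (d (x n) (x (n + 1 + 0 * 1)))"
      using \<open>a < 0\<close> assms(1)[of n "n + 1"] by (simp add: order_less_le_trans)
    also have "\<dots> \<le> (SUP m. ereal (d (x n) (x (n + 1 + m * 1))))"
      by (rule SUP_upper) simp
    finally show ?thesis .
  qed
  then show "eventually (\<lambda>n. a < (SUP m. ereal (d (x n) (x (n + 1 + m * 1))))) sequentially"
    by simp
next
  fix a :: ereal assume "0 < a"
  then obtain e where e: "0 < e" "ereal e < a"
    using ereal_dense2 by (metis ereal_less(2))
  have "eventually (\<lambda>n. \<forall>m>n. d (x n) (x m) \<le> e) sequentially"
    using e(1) by (rule assms(2))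
  then show "eventually (\<lambda>n. (SUP m. ereal (d (x n) (x (n + 1 + m * 1)))) < a) sequentially"
  proof (rule eventually_mono)
    fix n assume "\<forall>m>n. d (x n) (x m) \<le> e"
    then have "(SUP m. ereal (d (x n) (x (n + 1 + m * 1)))) \<le> ereal e"
      by (intro SUP_least) auto
    also have "\<dots> < a"
      by (rule e(2))
    finally show "(SUP m. ereal (d (x n) (x (n + 1 + m * 1)))) < a" .
  qed
qed

subsection \<open>Walks of indices with short steps\<close>

definition index_near :: "nat \<Rightarrow> nat \<Rightarrow> nat \<Rightarrow> bool" where
  "index_near k i j \<longleftrightarrow> i \<noteq> j \<and> i \<le> j + k \<and> j \<le> i + k"

lemma index_near_shift [simp]: "index_near k (i + n) (j + n) \<longleftrightarrow> index_near k i j"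
  by (auto simp: index_near_def)

lemma successively_index_near_upt: "1 \<le> k \<Longrightarrow> successively (index_near k) [a..<b]"
  using successively_upt_Suc by (rule successively_mono) (auto simp: index_near_def)

text \<open>A walk from 0 to 1 through the points 2, \<dots>, t+1 with steps of length at most 2:
  0, 2, 4, \<dots> upwards through the even points, then back down through the odd ones.\<close>
fun zigzag :: "nat \<Rightarrow> nat list" where
  "zigzag 0 = []"
| "zigzag (Suc 0) = [2]"
| "zigzag (Suc (Suc t)) = 2 # map (\<lambda>i. i + 2) (zigzag t) @ [3]"

lemma length_zigzag: "length (zigzag t) = t"
  by (induction t rule: zigzag.induct) auto

lemma set_zigzag: "set (zigzag t) = {2..t+1}"
proof (induction t rule: zigzag.induct)
  case (3 t)
  have "(\<lambda>i. i + 2) ` {2..t+1} = {4..t+3}"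
    by (simp only: image_add_atLeastAtMost') simp
  with 3 show ?case by auto
qed auto

lemma distinct_zigzag: "distinct (zigzag t)"
  by (induction t rule: zigzag.induct) (auto simp: set_zigzag distinct_map inj_on_def)

lemma successively_zigzag: "successively (index_near 2) (0 # zigzag t @ [1])"
proof (induction t rule: zigzag.induct)
  case (3 t)
  have "successively (index_near 2) (map (\<lambda>i. i + 2) (0 # zigzag t @ [1]))"
    using 3 by (simp only: successively_map index_near_shift)
  moreover have "0 # zigzag (Suc (Suc t)) @ [1] = [0] @ map (\<lambda>i. i + 2) (0 # zigzag t @ [1]) @ [1]"
    by simp
  ultimately show ?case
    by (simp only: successively_append_iff) (auto simp: index_near_def)
qed (auto simp: index_near_def)

text \<open>The walk goes straight up if k > \<nu>; otherwise it goes up to k - 1, zigzags through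
  k + 1, \<dots>, \<nu> + 1 and comes down to k.\<close>
lemma index_walk_exists:
  assumes "3 \<le> k" "1 \<le> \<nu>"
  obtains us where "length us = \<nu>" "distinct (0 # us @ [k])"
    "successively (index_near (k - 1)) (0 # us @ [k])"
proof (cases "\<nu> < k")
  case True
  have walk: "0 # [1..<\<nu>+1] @ [k] = [0..<\<nu>+1] @ [k]"
    by (simp add: upt_rec)
  have "successively (index_near (k - 1)) ([0..<\<nu>+1] @ [k])"
    using successively_index_near_upt[of "k - 1" 0 "\<nu>+1"] True assms
    by (simp only: successively_append_iff) (auto simp: index_near_def)
  then have "successively (index_near (k - 1)) (0 # [1..<\<nu>+1] @ [k])"
    by (simp only: walk)
  then show ?thesis
    using True by (intro that[of "[1..<\<nu>+1]"]) auto
next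
  case False
  define t where "t = \<nu> - (k - 1)"
  define zs where "zs = map (\<lambda>i. i + (k - 1)) (zigzag t)"
  have walk: "0 # ([1..<k] @ zs) @ [k] = [0..<k-1] @ map (\<lambda>i. i + (k - 1)) (0 # zigzag t @ [1])"
    using assms upt_Suc_append[of 0 "k - 1"] by (simp add: zs_def upt_rec)
  have "successively (index_near (k - 1)) (map (\<lambda>i. i + (k - 1)) (0 # zigzag t @ [1]))"
    unfolding successively_map index_near_shift
    using successively_zigzag by (rule successively_mono) (use assms in \<open>auto simp: index_near_def\<close>)
  then have "successively (index_near (k - 1)) (0 # ([1..<k] @ zs) @ [k])"
    unfolding walk using successively_index_near_upt[of "k - 1" 0 "k - 1"] assms
    by (auto simp: successively_append_iff index_near_def)
  moreover have "distinct (0 # ([1..<k] @ zs) @ [k])"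
    using assms by (auto simp: zs_def set_zigzag distinct_zigzag distinct_map inj_on_def)
  moreover have "length ([1..<k] @ zs) = \<nu>"
    using False assms by (simp add: zs_def length_zigzag t_def)
  ultimately show ?thesis by (intro that[of "[1..<k] @ zs"])
qed

locale gen_metric_seq =
  fixes \<nu> :: nat and X :: "'a set" and d :: "'a \<Rightarrow> 'a \<Rightarrow> real" and x :: "nat \<Rightarrow> 'a"
  assumes gen_metric: "gen_metric \<nu> X d"
    and in_X: "\<And>n. x n \<in> X"
    and inj: "inj x"
begin

lemma nu_ge_1: "1 \<le> \<nu>"
  using gen_metric by (simp add: gen_metric_def)

lemma nonneg: "0 \<le> d (x i) (x j)"
  using gen_metric in_X by (simp add: gen_metric_def)

lemma sym: "d (x i) (x j) = d (x j) (x i)"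
  using gen_metric in_X by (simp add: gen_metric_def)

lemma self_zero [simp]: "d (x i) (x i) = 0"
  using gen_metric in_X by (simp add: gen_metric_def)

lemma le_path_len:
  assumes "distinct (a # us @ [b])" and "length us = \<nu>"
  shows "d (x a) (x b) \<le> path_len d (x a) (map x us) (x b)"
proof -
  have "inj_on x (set (a # us @ [b]))"
    using inj by (rule inj_on_subset) simp
  with assms(1) have "distinct (map x (a # us @ [b]))"
    by (simp only: distinct_map)
  moreover have "set (map x us) \<subseteq> X"
    using in_X by auto
  ultimately show ?thesis
    using gen_metric assms(2) in_X unfolding gen_metric_def by auto
qed

lemma le_walk:
  assumes "distinct (a # us @ [b])" and "length us = \<nu>"
    and "successively (\<lambda>i j. d (x i) (x j) \<le> \<eta>) (a # us @ [b])"
  shows "d (x a) (x b) \<le> (real \<nu> + 1) * \<eta>"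
proof -
  have "successively (\<lambda>u v. d u v \<le> \<eta>) (x a # map x us @ [x b])"
    using assms(3) successively_map[of _ x "a # us @ [b]"] by simp
  then show ?thesis
    using le_path_len[OF assms(1,2)] path_len_le assms(2) by fastforce
qed

lemma near_pairs_lt:
  assumes "\<And>h. h \<in> {1..k} \<Longrightarrow> (\<lambda>n. d (x n) (x (n + h))) \<longlonglongrightarrow> 0" and "\<eta> > 0"
  obtains N where "\<And>i j. N \<le> i \<Longrightarrow> N \<le> j \<Longrightarrow> index_near k i j \<Longrightarrow> d (x i) (x j) < \<eta>"
proof -
  have "eventually (\<lambda>n. \<forall>h\<in>{1..k}. d (x n) (x (n + h)) < \<eta>) sequentially"
    by (rule eventually_ball_finite) (auto intro!: order_tendstoD(2)[OF assms])
  then obtain N where N: "\<And>n h. N \<le> n \<Longrightarrow> h \<in> {1..k} \<Longrightarrow> d (x n) (x (n + h)) < \<eta>"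
    unfolding eventually_sequentially by blast
  have "d (x i) (x j) < \<eta>" if "N \<le> i" "N \<le> j" "index_near k i j" for i j
  proof (cases "i < j")
    case True
    with that have "j - i \<in> {1..k}" by (auto simp: index_near_def)
    then show ?thesis
      using N[of i "j - i"] that True by simp
  next
    case False
    with that have "i - j \<in> {1..k}" by (auto simp: index_near_def)
    then show ?thesis
      using N[of j "i - j"] that False sym[of i j] by simp
  qed
  then show ?thesis by (rule that)
qed

lemma gap_tendsto_zero:
  assumes "(\<lambda>n. d (x n) (x (n + 1))) \<longlonglongrightarrow> 0" and "(\<lambda>n. d (x n) (x (n + 2))) \<longlonglongrightarrow> 0"
    and "1 \<le> k"
  shows "(\<lambda>n. d (x n) (x (n + k))) \<longlonglongrightarrow> 0"
  using \<open>1 \<le> k\<close>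
proof (induction k rule: less_induct)
  case (less k)
  show ?case
  proof (cases "k \<le> 2")
    case True
    with less.prems have "k = 1 \<or> k = 2" by auto
    with assms(1,2) show ?thesis by auto
  next
    case False
    show ?thesis
    proof (rule tendsto_zero_if_eventually_le[OF nonneg])
      fix r :: real assume "r > 0"
      then have pos: "r / (real \<nu> + 1) > 0" by simp
      have gaps: "(\<lambda>n. d (x n) (x (n + h))) \<longlonglongrightarrow> 0" if "h \<in> {1..k - 1}" for h
        using that by (intro less.IH) auto
      obtain N where N: "\<And>i j. N \<le> i \<Longrightarrow> N \<le> j \<Longrightarrow> index_near (k - 1) i j
          \<Longrightarrow> d (x i) (x j) < r / (real \<nu> + 1)"
        using near_pairs_lt[OF gaps pos] by blast
      obtain us where us: "length us = \<nu>" "distinct (0 # us @ [k])"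
        "successively (index_near (k - 1)) (0 # us @ [k])"
        using index_walk_exists False nu_ge_1 by (metis not_less_eq_eq numeral_3_eq_3 numeral_2_eq_2)
      have "d (x n) (x (n + k)) \<le> r" if "N \<le> n" for n
      proof -
        let ?us = "map (\<lambda>i. i + n) us"
        have walk: "map (\<lambda>i. i + n) (0 # us @ [k]) = n # ?us @ [n + k]"
          by simp
        have step: "d (x (i + n)) (x (j + n)) \<le> r / (real \<nu> + 1)" if "index_near (k - 1) i j" for i j
          using N[of "i + n" "j + n"] that \<open>N \<le> n\<close> by simp
        have "distinct (n # ?us @ [n + k])"
          unfolding walk[symmetric] using us(2) by (simp only: distinct_map) (simp add: inj_on_def)
        moreover have "length ?us = \<nu>"
          using us(1) by simp
        moreover have "successively (\<lambda>i j. d (x i) (x j) \<le> r / (real \<nu> + 1)) (n # ?us @ [n + k])"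
          unfolding walk[symmetric] successively_map using us(3) by (rule successively_mono) (rule step)
        ultimately have "d (x n) (x (n + k)) \<le> (real \<nu> + 1) * (r / (real \<nu> + 1))"
          by (rule le_walk)
        also have "\<dots> = r" by simp
        finally show ?thesis .
      qed
      then show "eventually (\<lambda>n. d (x n) (x (n + k)) \<le> r) sequentially"
        by (auto simp: eventually_sequentially)
    qed
  qed
qed


lemma eventually_window_le:
  assumes "\<And>h. 1 \<le> h \<Longrightarrow> (\<lambda>n. d (x n) (x (n + h))) \<longlonglongrightarrow> 0" and "\<eta> > 0"
  shows "eventually (\<lambda>n. \<forall>i\<in>{n..n+L}. \<forall>j\<in>{n..n+L}. d (x i) (x j) \<le> \<eta>) sequentially"
proof -
  obtain N where N: "\<And>i j. N \<le> i \<Longrightarrow> N \<le> j \<Longrightarrow> index_near L i j \<Longrightarrow> d (x i) (x j) < \<eta>"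
    using near_pairs_lt[of L \<eta>] assms by auto
  have "d (x i) (x j) \<le> \<eta>" if "N \<le> n" "i \<in> {n..n+L}" "j \<in> {n..n+L}" for n i j
  proof (cases "i = j")
    case False
    with that have "index_near L i j" by (auto simp: index_near_def)
    with that N[of i j] show ?thesis by simp
  qed (use assms(2) in simp)
  then show ?thesis
    unfolding eventually_sequentially by blast
qed

text \<open>Let m be the first index after a + 1 that is \<epsilon>-far from a + 1. If all distances within the
  window a, \<dots>, a + \<nu> + 1 are at most \<eta> \<le> \<epsilon>, then m lies beyond the window, and the walk
  a, a + 2, \<dots>, a + \<nu>, a + 1, m - 1 shows that a and m - 1 are almost \<epsilon>-close.\<close>
lemma exit_pair_exists:
  fixes \<eta> \<epsilon> :: real
  assumes window: "\<And>i j. i \<in> {a..a+\<nu>+1} \<Longrightarrow> j \<in> {a..a+\<nu>+1} \<Longrightarrow> d (x i) (x j) \<le> \<eta>"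
    and "\<eta> \<le> \<epsilon>" and far: "\<exists>m>a+1. \<epsilon> < d (x (a+1)) (x m)"
  obtains q where "a < q" "\<epsilon> < d (x (a+1)) (x (q+1))" "d (x a) (x q) \<le> \<epsilon> + real \<nu> * \<eta>"
proof -
  define m where "m = (LEAST m. a + 1 < m \<and> \<epsilon> < d (x (a+1)) (x m))"
  have m: "a + 1 < m" "\<epsilon> < d (x (a+1)) (x m)"
    using LeastI_ex[OF far] unfolding m_def by auto
  have "a + \<nu> + 1 < m"
  proof (rule ccontr)
    assume "\<not> a + \<nu> + 1 < m"
    then have "d (x (a+1)) (x m) \<le> \<epsilon>"
      using window[of "a+1" m] m(1) \<open>\<eta> \<le> \<epsilon>\<close> by simp
    with m(2) show False by simp
  qed
  define q where "q = m - 1"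
  have q: "a + \<nu> < q" "m = q + 1"
    using \<open>a + \<nu> + 1 < m\<close> by (simp_all add: q_def)
  have "q < m"
    using q(2) by simp
  then have "\<not> (a + 1 < q \<and> \<epsilon> < d (x (a+1)) (x q))"
    unfolding m_def by (rule not_less_Least)
  with q(1) nu_ge_1 have close: "d (x (a+1)) (x q) \<le> \<epsilon>" by auto
  define us where "us = [a+2..<a+\<nu>+1]"
  have "distinct (a # (us @ [a+1]) @ [q])" and "length (us @ [a+1]) = \<nu>"
    using q(1) nu_ge_1 by (auto simp: us_def)
  then have "d (x a) (x q) \<le> path_len d (x a) (map x (us @ [a+1])) (x q)"
    by (rule le_path_len)
  also have "\<dots> = path_len d (x a) (map x us) (x (a+1)) + d (x (a+1)) (x q)"
    by (simp add: path_len_snoc)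
  also have "path_len d (x a) (map x us) (x (a+1)) \<le> (real (length (map x us)) + 1) * \<eta>"
  proof (rule path_len_le)
    have "successively (\<lambda>i j. d (x i) (x j) \<le> \<eta>) (a # us @ [a+1])"
      using window[of a a] by (intro successively_if_all) (auto simp: us_def intro!: window)
    then show "successively (\<lambda>u v. d u v \<le> \<eta>) (x a # map x us @ [x (a+1)])"
      using successively_map[of _ x "a # us @ [a+1]"] by simp
  qed
  also have "real (length (map x us)) + 1 = \<nu>"
    using nu_ge_1 by (simp add: us_def of_nat_diff)
  finally have "d (x a) (x q) \<le> \<epsilon> + real \<nu> * \<eta>"
    using close by simp
  moreover have "a < q" "\<epsilon> < d (x (a+1)) (x (q+1))"
    using q m(2) by simp_all
  ultimately show ?thesis
    by (intro that)
qed

lemma exit_pairs_frequently: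
  assumes gaps: "\<And>h. 1 \<le> h \<Longrightarrow> (\<lambda>n. d (x n) (x (n + h))) \<longlonglongrightarrow> 0"
    and "\<epsilon> > 0" "\<delta> > 0" and far: "\<And>N. \<exists>n\<ge>N. \<exists>m>n. \<epsilon> < d (x n) (x m)"
  shows "\<exists>a q. N \<le> a \<and> a < q \<and> d (x a) (x q) \<le> \<epsilon> + \<delta> \<and> \<epsilon> < d (x (a+1)) (x (q+1))"
proof -
  define \<eta> where "\<eta> = min \<epsilon> (\<delta> / \<nu>)"
  have "\<eta> > 0"
    using assms nu_ge_1 by (simp add: \<eta>_def)
  then obtain M where M: "\<And>a. M \<le> a \<Longrightarrow> \<forall>i\<in>{a..a+(\<nu>+1)}. \<forall>j\<in>{a..a+(\<nu>+1)}. d (x i) (x j) \<le> \<eta>"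
    using eventually_window_le[OF gaps] unfolding eventually_sequentially by metis
  obtain n m where "max N M + 1 \<le> n" "n < m" "\<epsilon> < d (x n) (x m)"
    using far by blast
  moreover define a where "a = n - 1"
  ultimately have "N \<le> a" "M \<le> a" "n = a + 1" by auto
  have "real \<nu> * \<eta> \<le> \<delta>"
    using nu_ge_1 by (simp add: \<eta>_def min_def divide_simps mult.commute)
  obtain q where "a < q" "\<epsilon> < d (x (a+1)) (x (q+1))" "d (x a) (x q) \<le> \<epsilon> + real \<nu> * \<eta>"
  proof (rule exit_pair_exists)
    show "d (x i) (x j) \<le> \<eta>" if "i \<in> {a..a+\<nu>+1}" "j \<in> {a..a+\<nu>+1}" for i j
      using M[OF \<open>M \<le> a\<close>] that by simp
    show "\<eta> \<le> \<epsilon>" by (simp add: \<eta>_def)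
    show "\<exists>m>a+1. \<epsilon> < d (x (a+1)) (x m)"
      using \<open>n < m\<close> \<open>\<epsilon> < d (x n) (x m)\<close> \<open>n = a + 1\<close> by blast
  qed
  with \<open>N \<le> a\<close> \<open>real \<nu> * \<eta> \<le> \<delta>\<close> show ?thesis by force
qed

end


theorem theorem2p2:
  fixes \<nu> :: nat and X :: "'a set" and d :: "'a \<Rightarrow> 'a \<Rightarrow> real" and x :: "nat \<Rightarrow> 'a"
  assumes "gen_metric \<nu> X d"
    and "\<And>n. x n \<in> X"
    and "inj x"
    and "\<And>\<epsilon> p q. \<epsilon> > 0 \<Longrightarrow> strict_mono p \<Longrightarrow> strict_mono q \<Longrightarrow>
           limsup (\<lambda>i. ereal (d (x (p i)) (x (q i)))) \<le> ereal \<epsilon> \<Longrightarrow>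
           \<exists>N. \<forall>i\<ge>N. d (x (p i + 1)) (x (q i + 1)) \<le> \<epsilon>"
    and "(\<lambda>n. d (x n) (x (n + 1))) \<longlonglongrightarrow> 0"
    and "(\<lambda>n. d (x n) (x (n + 2))) \<longlonglongrightarrow> 0"
  shows "gm_cauchy d x"
proof -
  interpret gen_metric_seq \<nu> X d x
    using assms(1-3) by unfold_locales
  have gaps: "\<And>h. 1 \<le> h \<Longrightarrow> (\<lambda>n. d (x n) (x (n + h))) \<longlonglongrightarrow> 0"
    using gap_tendsto_zero[OF assms(5,6)] .
  show ?thesis
  proof (rule gm_cauchyI[where d = d and x = x, OF nonneg])
    fix \<epsilon> :: real assume "\<epsilon> > 0"
    show "eventually (\<lambda>n. \<forall>m>n. d (x n) (x m) \<le> \<epsilon>) sequentially"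
    proof (rule ccontr)
      assume "\<not> ?thesis"
      then have "\<And>N. \<exists>n\<ge>N. \<exists>m>n. \<epsilon> < d (x n) (x m)"
        by (auto simp: eventually_sequentially not_le)
      then have "\<exists>a q. N \<le> a \<and> a < q \<and>
          d (x a) (x q) \<le> \<epsilon> + 1 / (real i + 1) \<and> \<epsilon> < d (x (a+1)) (x (q+1))" for i N
        using exit_pairs_frequently[OF gaps \<open>\<epsilon> > 0\<close>] by simp
      then obtain p q where pq: "strict_mono p" "strict_mono q"
        and near: "\<And>i. d (x (p i)) (x (q i)) \<le> \<epsilon> + 1 / (real i + 1)"
        and far: "\<And>i. \<epsilon> < d (x (p i + 1)) (x (q i + 1))"
        by (rule strict_mono_pairs_exist[where P = "\<lambda>i a b. d (x a) (x b) \<le> \<epsilon> + 1 / (real i + 1)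
            \<and> \<epsilon> < d (x (a+1)) (x (b+1))"]) blast+
      obtain N where "\<forall>i\<ge>N. d (x (p i + 1)) (x (q i + 1)) \<le> \<epsilon>"
        using assms(4)[OF \<open>\<epsilon> > 0\<close> pq limsup_le_if_le_plus_inverse[OF near]] by blast
      with far[of N] show False by force
    qed
  qed
qed

end
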